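(* Let $\langle A;\cdot\rangle$ be a groupoid with an identity element which is an Abelian algebra. Then $\langle A;\cdot\rangle$ is a Hamiltonian algebra if and only if $\langle A;\cdot\rangle$ is a periodic commutative group (every element has finite order).
   Context: A groupoid is an algebra $\langle A;\cdot\rangle$ with one binary operation (its subalgebras are the nonempty subsets closed under $\cdot$); an identity element is $1\in A$ with $1\cdot a=a\cdot 1=a$ for all $a$. A polynomial operation of an algebra is an operation obtained from a term by substituting elements of the algebra for some of its variables. An algebra is called Abelian if for every polynomial operation $t(x,y_1,\ldots,y_n)$ and all elements $u,v,c_1,\ldots,c_n,d_1,\ldots,d_n$ of the algebra, $t(u,c_1,\ldots,c_n)=t(u,d_1,\ldots,d_n)$ implies $t(v,c_1,\ldots,c_n)=t(v,d_1,\ldots,d_n)$. An algebra is called Hamiltonian if the universe of every subalgebra is an equivalence class (block) of some congruence of the algebra. *)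

theory Defs
  imports "HOL-Algebra.Group"
begin

text \<open>A groupoid is represented by its operation m on the type 'a, whose universe
  (UNIV) is the universe of the algebra.\<close>

text \<open>Terms with constants (polynomials): X is the distinguished variable x,
  Y i are the parameter variables y_i, C a is a constant a.\<close>
datatype 'a pterm = X | Y nat | C 'a | Mul "'a pterm" "'a pterm"

primrec peval :: "('a \<Rightarrow> 'a \<Rightarrow> 'a) \<Rightarrow> 'a \<Rightarrow> (nat \<Rightarrow> 'a) \<Rightarrow> 'a pterm \<Rightarrow> 'a" where
  "peval m x ys X = x"
| "peval m x ys (Y i) = ys i"
| "peval m x ys (C a) = a"
| "peval m x ys (Mul s t) = m (peval m x ys s) (peval m x ys t)"

definition has_identity :: "('a \<Rightarrow> 'a \<Rightarrow> 'a) \<Rightarrow> bool" where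
  "has_identity m \<longleftrightarrow> (\<exists>e. \<forall>a. m e a = a \<and> m a e = a)"

definition abelian_alg :: "('a \<Rightarrow> 'a \<Rightarrow> 'a) \<Rightarrow> bool" where
  "abelian_alg m \<longleftrightarrow> (\<forall>t u v (c :: nat \<Rightarrow> 'a) d.
      peval m u c t = peval m u d t \<longrightarrow> peval m v c t = peval m v d t)"

definition subalgebra :: "('a \<Rightarrow> 'a \<Rightarrow> 'a) \<Rightarrow> 'a set \<Rightarrow> bool" where
  "subalgebra m S \<longleftrightarrow> S \<noteq> {} \<and> (\<forall>a\<in>S. \<forall>b\<in>S. m a b \<in> S)"

definition congruence_rel :: "('a \<Rightarrow> 'a \<Rightarrow> 'a) \<Rightarrow> ('a \<times> 'a) set \<Rightarrow> bool" where
  "congruence_rel m \<theta> \<longleftrightarrow> equiv UNIV \<theta> \<and>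
     (\<forall>a b c d. (a, b) \<in> \<theta> \<and> (c, d) \<in> \<theta> \<longrightarrow> (m a c, m b d) \<in> \<theta>)"

definition hamiltonian :: "('a \<Rightarrow> 'a \<Rightarrow> 'a) \<Rightarrow> bool" where
  "hamiltonian m \<longleftrightarrow> (\<forall>S. subalgebra m S \<longrightarrow>
      (\<exists>\<theta> a. congruence_rel m \<theta> \<and> S = \<theta> `` {a}))"

definition periodic_comm_group :: "('a \<Rightarrow> 'a \<Rightarrow> 'a) \<Rightarrow> bool" where
  "periodic_comm_group m \<longleftrightarrow> (\<exists>e. comm_group \<lparr>carrier = UNIV, mult = m, one = e\<rparr> \<and>
      (\<forall>a. \<exists>n::nat. n > 0 \<and> a [^]\<^bsub>\<lparr>carrier = UNIV, mult = m, one = e\<rparr>\<^esub> n = e))"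

end

theory Submission
  imports Defs "HOL-Algebra.Coset"
begin

text \<open>With an identity e, the Abelian property applied to the polynomials (y0 x) y1 and x y0
  gives commutativity, the exchange law (a x) b = (a b) x and left cancellation, so A is a
  cancellative commutative monoid. If A is moreover Hamiltonian, then for each a the subalgebra
  {a^n | n \<ge> 2, n \<noteq> 3} is a congruence class; it contains a^2, a^4 and a^5 = a a^4, hence also
  a^3 = a a^2. So a^3 = a^n for some n \<noteq> 3, and cancellation yields a^k = e with k > 0.
  Conversely, in a periodic group every subalgebra is closed under inverses (the inverse of a
  is a power of a), hence a subgroup, and in a commutative group every subgroup is the class
  of the identity under the congruence x \<equiv> y \<longleftrightarrow> x\<inverse> y \<in> S.\<close>

abbreviation monoid_of :: "('a \<Rightarrow> 'a \<Rightarrow> 'a) \<Rightarrow> 'a \<Rightarrow> 'a monoid" where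
  "monoid_of m e \<equiv> \<lparr>carrier = UNIV, mult = m, one = e\<rparr>"

lemma abelian_alg_comm:
  assumes ab: "abelian_alg m" and e: "\<And>a. m e a = a" "\<And>a. m a e = a"
  shows "m a v = m v a"
proof -
  let ?t = "Mul (Mul (Y 0) X) (Y 1)"
  let ?c = "\<lambda>i::nat. if i = 0 then a else e"
  let ?d = "\<lambda>i::nat. if i = 0 then e else a"
  have "peval m e ?c ?t = peval m e ?d ?t" using e by simp
  with ab have "peval m v ?c ?t = peval m v ?d ?t" unfolding abelian_alg_def by blast
  thus ?thesis using e by simp
qed

lemma abelian_alg_exchange:
  assumes ab: "abelian_alg m" and e: "\<And>a. m e a = a" "\<And>a. m a e = a"
  shows "m (m a v) b = m (m a b) v"
proof -
  let ?t = "Mul (Mul (Y 0) X) (Y 1)"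
  let ?c = "\<lambda>i::nat. if i = 0 then a else b"
  let ?d = "\<lambda>i::nat. if i = 0 then m a b else e"
  have "peval m e ?c ?t = peval m e ?d ?t" using e by simp
  with ab have "peval m v ?c ?t = peval m v ?d ?t" unfolding abelian_alg_def by blast
  thus ?thesis using e by simp
qed

lemma abelian_alg_left_cancel:
  assumes ab: "abelian_alg m" and e: "\<And>a. m e a = a" and eq: "m x y = m x z"
  shows "y = z"
proof -
  let ?t = "Mul X (Y 0)"
  have "peval m x (\<lambda>_. y) ?t = peval m x (\<lambda>_. z) ?t" using eq by simp
  with ab have "peval m e (\<lambda>_. y) ?t = peval m e (\<lambda>_. z) ?t" unfolding abelian_alg_def by blast
  thus ?thesis using e by simp
qed

lemma abelian_alg_comm_monoid:
  assumes ab: "abelian_alg m" and e: "\<And>a. m e a = a" "\<And>a. m a e = a"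
  shows "comm_monoid (monoid_of m e)"
proof (rule comm_monoidI, simp_all add: e)
  fix x y z
  have "m (m x y) z = m (m y x) z" using abelian_alg_comm[OF ab e] by simp
  also have "\<dots> = m (m y z) x" using abelian_alg_exchange[OF ab e] by simp
  also have "\<dots> = m x (m y z)" using abelian_alg_comm[OF ab e] by simp
  finally show "m (m x y) z = m x (m y z)" .
  show "m x y = m y x" using abelian_alg_comm[OF ab e] .
qed

lemma (in monoid) nat_pow_eq_imp_nat_pow_diff_eq_one:
  assumes cancel:
      "\<And>x y z. \<lbrakk>x \<in> carrier G; y \<in> carrier G; z \<in> carrier G; x \<otimes> y = x \<otimes> z\<rbrakk> \<Longrightarrow> y = z"
    and a: "a \<in> carrier G" and pq: "(p::nat) < q" and eq: "a [^] p = a [^] q"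
  shows "a [^] (q - p) = \<one>"
proof (rule cancel)
  have "a [^] p \<otimes> a [^] (q - p) = a [^] q" using pq by (simp add: a nat_pow_mult)
  thus "a [^] p \<otimes> a [^] (q - p) = a [^] p \<otimes> \<one>" using eq a by simp
qed (use a in auto)

lemma (in monoid) periodic_imp_inv_eq_nat_pow:
  assumes a: "a \<in> carrier G" and n: "(n::nat) > 0" "a [^] n = \<one>"
  shows "a \<in> Units G" and "inv a = a [^] (n - 1)"
proof -
  have c: "a [^] (n - 1) \<in> carrier G" using a by simp
  have l: "a [^] (n - 1) \<otimes> a = \<one>" and r: "a \<otimes> a [^] (n - 1) = \<one>"
    using n a nat_pow_Suc[of a "n - 1"] nat_pow_Suc2[of a "n - 1"] by simp_all
  show "a \<in> Units G" using a c l r unfolding Units_def by blast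
  show "inv a = a [^] (n - 1)" using inv_unique'[OF a c r l] by (rule sym)
qed

lemma (in comm_monoid) periodic_imp_comm_group:
  assumes periodic: "\<And>a. a \<in> carrier G \<Longrightarrow> \<exists>n::nat>0. a [^] n = \<one>"
  shows "comm_group G"
proof -
  have "carrier G \<subseteq> Units G"
    using periodic periodic_imp_inv_eq_nat_pow(1) by blast
  thus ?thesis
    by (simp add: comm_group_def comm_monoid_axioms group_def group_axioms_def monoid_axioms)
qed

lemma (in group) periodic_closed_subset_imp_subgroup:
  assumes periodic: "\<And>a. a \<in> carrier G \<Longrightarrow> \<exists>n::nat>0. a [^] n = \<one>"
    and H: "H \<subseteq> carrier G" "H \<noteq> {}"
    and closed: "\<And>a b. \<lbrakk>a \<in> H; b \<in> H\<rbrakk> \<Longrightarrow> a \<otimes> b \<in> H"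
  shows "subgroup H G"
proof (rule subgroupI[OF H _ closed])
  have pow_closed: "a [^] Suc k \<in> H" if "a \<in> H" for a k
    using that H(1) by (induction k) (auto intro: closed)
  fix a assume a: "a \<in> H"
  then obtain n :: nat where n: "n > 0" "a [^] n = \<one>" using periodic H(1) by blast
  show "inv a \<in> H"
  proof (cases "n = 1")
    case True
    thus ?thesis using a n subsetD[OF H(1) a] by simp
  next
    case False
    with n have "n - 1 = Suc (n - 2)" by simp
    moreover have "inv a = a [^] (n - 1)"
      using periodic_imp_inv_eq_nat_pow(2) subsetD[OF H(1) a] n by blast
    ultimately show ?thesis using pow_closed[OF a] by simp
  qed
qed

lemma (in comm_group) rcong_mult:
  assumes "(a, b) \<in> rcong H" "(c, d) \<in> rcong H" and H: "subgroup H G"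
  shows "(a \<otimes> c, b \<otimes> d) \<in> rcong H"
proof -
  have carr: "a \<in> carrier G" "b \<in> carrier G" "c \<in> carrier G" "d \<in> carrier G"
    and "inv a \<otimes> b \<in> H" "inv c \<otimes> d \<in> H"
    using assms(1,2) unfolding r_congruent_def by auto
  hence "(inv a \<otimes> b) \<otimes> (inv c \<otimes> d) \<in> H" by (simp add: H subgroup.m_closed)
  moreover have "(inv a \<otimes> b) \<otimes> (inv c \<otimes> d) = inv (a \<otimes> c) \<otimes> (b \<otimes> d)"
    using carr by (simp add: inv_mult m_ac)
  ultimately show ?thesis using carr unfolding r_congruent_def by simp
qed

lemma congruence_class_left_mult:
  assumes "congruence_rel m \<theta>" and "x \<in> \<theta> `` {c}" "y \<in> \<theta> `` {c}" "m a y \<in> \<theta> `` {c}"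
  shows "m a x \<in> \<theta> `` {c}"
proof -
  have eqv: "equiv UNIV \<theta>"
    and compat: "\<And>a b c d. (a, b) \<in> \<theta> \<Longrightarrow> (c, d) \<in> \<theta> \<Longrightarrow> (m a c, m b d) \<in> \<theta>"
    using assms(1) unfolding congruence_rel_def by blast+
  have "(c, x) \<in> \<theta>" "(c, y) \<in> \<theta>" "(c, m a y) \<in> \<theta>" using assms(2-4) by simp_all
  moreover have "(a, a) \<in> \<theta>" using eqv by (simp add: equiv_def refl_on_def)
  ultimately have "(c, m a y) \<in> \<theta>" "(m a y, m a x) \<in> \<theta>"
    using compat eqv by (blast elim: equivE dest: symD transD)+
  thus ?thesis using eqv by (blast elim: equivE dest: transD)
qed

lemma hamiltonian_cancel_monoid_periodic:
  fixes G (structure)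
  assumes "monoid G" and univ: "carrier G = UNIV"
    and cancel: "\<And>x y z. x \<otimes> y = x \<otimes> z \<Longrightarrow> y = z" and ham: "hamiltonian (\<otimes>)"
  shows "\<exists>n::nat>0. a [^] n = \<one>"
proof -
  interpret monoid G by fact
  define S where "S = {a [^] n | n. n \<ge> 2 \<and> n \<noteq> (3::nat)}"
  have "subalgebra (\<otimes>) S"
    unfolding subalgebra_def
  proof (intro conjI ballI)
    show "S \<noteq> {}" unfolding S_def by force
  next
    fix x y assume "x \<in> S" "y \<in> S"
    then obtain p q :: nat where "x = a [^] p" "y = a [^] q" "p \<ge> 2" "q \<ge> 2"
      unfolding S_def by blast
    moreover have "a [^] p \<otimes> a [^] q = a [^] (p + q)" by (simp add: univ nat_pow_mult)
    ultimately show "x \<otimes> y \<in> S" unfolding S_def by (intro CollectI exI[of _ "p + q"]) auto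
  qed
  then obtain \<theta> c where cong: "congruence_rel (\<otimes>) \<theta>" and S: "S = \<theta> `` {c}"
    using ham unfolding hamiltonian_def by blast
  have pow_in_class: "a [^] k \<in> \<theta> `` {c}" if "k \<ge> 2" "k \<noteq> 3" for k :: nat
    using that unfolding S[symmetric] S_def by blast
  have pow_Suc: "a [^] Suc k = a \<otimes> a [^] k" for k :: nat
    using nat_pow_Suc2[of a k] by (simp add: univ)
  have "a [^] (3::nat) = a \<otimes> a [^] (2::nat)" "a [^] (5::nat) = a \<otimes> a [^] (4::nat)"
    using pow_Suc[of 2] pow_Suc[of 4] by simp_all
  moreover have "a \<otimes> a [^] (2::nat) \<in> \<theta> `` {c}"
    using congruence_class_left_mult[OF cong pow_in_class pow_in_class, of 2 4]
      pow_in_class[of 5] calculation by simp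
  ultimately have "a [^] (3::nat) \<in> S" using S by simp
  then obtain n :: nat where n: "a [^] (3::nat) = a [^] n" "n \<ge> 2" "n \<noteq> 3"
    unfolding S_def by auto
  have a: "a \<in> carrier G" by (simp add: univ)
  have cancel': "y = z"
    if "x \<in> carrier G" "y \<in> carrier G" "z \<in> carrier G" "x \<otimes> y = x \<otimes> z" for x y z
    using cancel that(4) .
  consider "n = 2" | "3 < n" using n by linarith
  thus ?thesis
  proof cases
    case 1
    have "a [^] (3 - 2 :: nat) = \<one>"
      by (rule nat_pow_eq_imp_nat_pow_diff_eq_one[OF cancel' a]) (use n 1 in simp_all)
    thus ?thesis by (intro exI[of _ "3 - 2"]) simp
  next
    case 2
    have "a [^] (n - 3) = \<one>"
      by (rule nat_pow_eq_imp_nat_pow_diff_eq_one[OF cancel' a]) (use n 2 in simp_all)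
    thus ?thesis using 2 by (intro exI[of _ "n - 3"]) simp
  qed
qed

lemma subgroup_is_congruence_class:
  fixes G (structure)
  assumes "comm_group G" and univ: "carrier G = UNIV" and H: "subgroup H G"
  shows "\<exists>\<theta> a. congruence_rel (\<otimes>) \<theta> \<and> H = \<theta> `` {a}"
proof (intro exI conjI)
  interpret comm_group G by fact
  show "congruence_rel (\<otimes>) (rcong H)"
    using subgroup.equiv_rcong[OF H is_group] rcong_mult[OF _ _ H]
    unfolding congruence_rel_def univ by simp
  show "H = (rcong H) `` {\<one>}"
    using subgroup.mem_carrier[OF H] by (auto simp: r_congruent_def univ)
qed

theorem mainTheorem5:
  fixes m :: "'a \<Rightarrow> 'a \<Rightarrow> 'a"
  assumes "has_identity m" and "abelian_alg m"
  shows "hamiltonian m \<longleftrightarrow> periodic_comm_group m"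
proof
  assume ham: "hamiltonian m"
  obtain e where e: "\<And>a. m e a = a" "\<And>a. m a e = a"
    using assms(1) unfolding has_identity_def by blast
  have G: "comm_monoid (monoid_of m e)"
    using abelian_alg_comm_monoid[OF assms(2) e] .
  have periodic: "\<And>a. \<exists>n::nat>0. a [^]\<^bsub>monoid_of m e\<^esub> n = e"
    using hamiltonian_cancel_monoid_periodic[of "monoid_of m e", simplified, OF _ _ ham]
      comm_monoid.axioms(1)[OF G] abelian_alg_left_cancel[OF assms(2) e(1)] by blast
  show "periodic_comm_group m"
    unfolding periodic_comm_group_def
    using periodic comm_monoid.periodic_imp_comm_group[OF G] by auto
next
  assume "periodic_comm_group m"
  then obtain e where G: "comm_group (monoid_of m e)"
    and periodic: "\<And>a. \<exists>n::nat>0. a [^]\<^bsub>monoid_of m e\<^esub> n = e"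
    unfolding periodic_comm_group_def by blast
  show "hamiltonian m"
    unfolding hamiltonian_def subalgebra_def
    using subgroup_is_congruence_class[of "monoid_of m e", simplified, OF G]
      group.periodic_closed_subset_imp_subgroup[OF comm_group.axioms(2)[OF G]] periodic
    by auto
qed

end
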